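(* Let $X$ be a Banach space and let $A$ be a convex bounded subset of $X$. If $A$ endowed with the relative weak topology $\sigma(X,X^* )$ has a countable $\pi$-base, then $A$ is an SCD set.
   Context: A $\pi$-base of a topological space $T$ is a family of nonempty open sets such that every nonempty open subset of $T$ contains one of them. A slice of $A$ is $S(A,x^*,\varepsilon)=\{x\in A:\ \mathrm{Re}\,x^*(x)>\sup\mathrm{Re}\,x^*(A)-\varepsilon\}$. $A$ is an SCD set if there is a sequence $(S_n)$ of slices of $A$ such that $A\subseteq\overline{\mathrm{conv}}(B)$ for every $B\subseteq A$ intersecting every $S_n$. *)

theory Defs
  imports "HOL-Analysis.Analysis"
begin

definition weak_topology :: "'a::real_normed_vector topology" where
  "weak_topology = topology_generated_by
     {f -` V | f V. bounded_linear (f :: 'a \<Rightarrow> real) \<and> open V}"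

definition pi_base :: "'a topology \<Rightarrow> 'a set set \<Rightarrow> bool" where
  "pi_base T P \<longleftrightarrow> (\<forall>U\<in>P. openin T U \<and> U \<noteq> {}) \<and>
     (\<forall>V. openin T V \<and> V \<noteq> {} \<longrightarrow> (\<exists>U\<in>P. U \<subseteq> V))"

definition has_countable_pi_base :: "'a topology \<Rightarrow> bool" where
  "has_countable_pi_base T \<longleftrightarrow> (\<exists>P. countable P \<and> pi_base T P)"

definition slice :: "'a set \<Rightarrow> ('a \<Rightarrow> real) \<Rightarrow> real \<Rightarrow> 'a set" where
  "slice A f e = {x\<in>A. f x > Sup (f ` A) - e}"

definition SCD_set :: "'a::real_normed_vector set \<Rightarrow> bool" where
  "SCD_set A \<longleftrightarrow> (\<exists>(f :: nat \<Rightarrow> 'a \<Rightarrow> real) (e :: nat \<Rightarrow> real).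
     (\<forall>n. bounded_linear (f n) \<and> e n > 0) \<and>
     (\<forall>B. B \<subseteq> A \<and> (\<forall>n. B \<inter> slice A (f n) (e n) \<noteq> {}) \<longrightarrow>
          A \<subseteq> closure (convex hull B)))"

end

(* By Bourgain's lemma, every nonempty relatively weakly open subset U of a bounded convex set A
   contains a convex combination of slices of A: there are finitely many slices such that every
   set B meeting all of them has a convex combination in U.  Doing this for each member of a
   countable pi-base yields countably many slices; if B meets all of them, conv B meets every
   nonempty relatively weakly open subset of A, and the Hahn-Banach separation theorem then
   puts A inside the closure of conv B.

   Hahn-Banach is obtained from Zorn's lemma: a minimal sublinear functional below a given one
   is linear.  Bourgain's lemma is proved for the seminorm Q(x) = sum of f(x)^2 over the finitely
   many functionals f defining a basic weak neighbourhood: points e of A having slices of small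
   Q-diameter around them are Q-dense in A up to convex combinations, because an almost
   maximiser of a linear functional plus Q/2 is such a point. *)

theory Submission
  imports Defs
begin

definition sublinear :: "('a::real_vector \<Rightarrow> real) \<Rightarrow> bool" where
  "sublinear p \<longleftrightarrow> (\<forall>x y. p (x + y) \<le> p x + p y) \<and> (\<forall>a x. 0 < a \<longrightarrow> p (a *\<^sub>R x) = a * p x)"

lemma sublinear_add_le: "sublinear p \<Longrightarrow> p (x + y) \<le> p x + p y"
  unfolding sublinear_def by blast

lemma sublinear_scaleR: "sublinear p \<Longrightarrow> 0 < a \<Longrightarrow> p (a *\<^sub>R x) = a * p x"
  unfolding sublinear_def by blast

lemma sublinearI:
  assumes "\<And>x y. p (x + y) \<le> p x + p y" and "\<And>a x. 0 < a \<Longrightarrow> p (a *\<^sub>R x) = a * p x"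
  shows "sublinear p"
  unfolding sublinear_def using assms by blast

lemma sublinear_zero: "sublinear p \<Longrightarrow> p 0 = 0"
  using sublinear_scaleR[of p 2 0] by simp

lemma sublinear_scaleR_nonneg: "sublinear p \<Longrightarrow> 0 \<le> a \<Longrightarrow> p (a *\<^sub>R x) = a * p x"
  by (cases "a = 0") (auto simp: sublinear_zero sublinear_scaleR)

lemma sublinear_neg_le: "sublinear p \<Longrightarrow> - p (- x) \<le> p x"
  using sublinear_add_le[of p x "- x"] sublinear_zero[of p] by simp

lemma sublinear_norm: "sublinear norm"
  by (rule sublinearI) (auto intro: norm_triangle_ineq)

context
  fixes P :: "('a::real_vector \<Rightarrow> real) set"
  assumes P_ne: "P \<noteq> {}" and sub: "\<And>p. p \<in> P \<Longrightarrow> sublinear p"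
    and chain: "\<And>p p'. p \<in> P \<Longrightarrow> p' \<in> P \<Longrightarrow> p \<le> p' \<or> p' \<le> p"
    and bdd: "\<And>x. bdd_below ((\<lambda>p. p x) ` P)"
begin

text \<open>Two members of the chain can both be replaced by the smaller one.\<close>
lemma INF_chain_add_le: "(INF p\<in>P. p (x + y)) \<le> (INF p\<in>P. p x) + (INF p\<in>P. p y)"
proof -
  have step: "(INF p\<in>P. p (x + y)) - p x \<le> p' y" if "p \<in> P" "p' \<in> P" for p p'
    using chain[OF that]
  proof
    assume "p \<le> p'"
    then show ?thesis
      using le_funD[of p p' y] cINF_lower[OF bdd that(1), of "x + y"]
        sublinear_add_le[OF sub[OF that(1)], of x y]
      by linarith
  next
    assume "p' \<le> p"
    then show ?thesis
      using le_funD[of p' p x] cINF_lower[OF bdd that(2), of "x + y"]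
        sublinear_add_le[OF sub[OF that(2)], of x y]
      by linarith
  qed
  have "(INF p\<in>P. p (x + y)) - p x \<le> (INF p'\<in>P. p' y)" if "p \<in> P" for p
    using step[OF that] by (rule cINF_greatest[OF P_ne])
  then have "(INF p\<in>P. p (x + y)) - (INF p'\<in>P. p' y) \<le> (INF p\<in>P. p x)"
    by (intro cINF_greatest[OF P_ne]) (simp add: algebra_simps)
  then show ?thesis
    by simp
qed

lemma INF_chain_scaleR:
  assumes "0 < a"
  shows "(INF p\<in>P. p (a *\<^sub>R x)) = a * (INF p\<in>P. p x)"
proof -
  have scale: "p (a *\<^sub>R x) = a * p x" if "p \<in> P" for p
    using sublinear_scaleR[OF sub[OF that] assms] .
  have "(INF p\<in>P. p (a *\<^sub>R x)) / a \<le> p x" if "p \<in> P" for p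
    using cINF_lower[OF bdd that, of "a *\<^sub>R x"] scale[OF that] assms by (simp add: divide_le_eq mult.commute)
  then have "(INF p\<in>P. p (a *\<^sub>R x)) / a \<le> (INF p\<in>P. p x)"
    by (rule cINF_greatest[OF P_ne])
  moreover have "a * (INF p\<in>P. p x) \<le> p (a *\<^sub>R x)" if "p \<in> P" for p
    using cINF_lower[OF bdd that, of x] scale[OF that] assms by simp
  then have "a * (INF p\<in>P. p x) \<le> (INF p\<in>P. p (a *\<^sub>R x))"
    by (rule cINF_greatest[OF P_ne])
  ultimately show ?thesis
    using assms by (simp add: divide_le_eq mult.commute)
qed

lemma sublinear_INF_chain: "sublinear (\<lambda>x. INF p\<in>P. p x)"
  using INF_chain_add_le INF_chain_scaleR by (intro sublinearI)

end

lemma exists_minimal_sublinear_below: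
  fixes q :: "'a::real_vector \<Rightarrow> real"
  assumes "sublinear q"
  obtains p where "sublinear p" "p \<le> q" "\<And>p'. sublinear p' \<Longrightarrow> p' \<le> p \<Longrightarrow> p' = p"
proof -
  define S where "S = {p. sublinear p \<and> p \<le> q}"
  have "\<exists>m\<in>S. \<forall>p\<in>S. p \<le> m \<longrightarrow> p = m"
  proof (rule predicate_Zorn)
    show "partial_order_on S (relation_of (\<lambda>p p'. p' \<le> p) S)"
      by (auto simp: partial_order_on_def preorder_on_def refl_on_def trans_on_def antisym_on_def
          relation_of_def)
  next
    fix C assume C: "C \<in> Chains (relation_of (\<lambda>p p'. p' \<le> p) S)"
    then have CS: "C \<subseteq> S" and chain: "\<And>p p'. p \<in> C \<Longrightarrow> p' \<in> C \<Longrightarrow> p \<le> p' \<or> p' \<le> p"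
      by (auto simp: Chains_def relation_of_def)
    show "\<exists>u\<in>S. \<forall>p\<in>C. u \<le> p"
    proof (cases "C = {}")
      case True
      then show ?thesis
        using assms by (auto simp: S_def)
    next
      case False
      have lower: "- q (- x) \<le> p x" if "p \<in> C" for p x
        using that CS sublinear_neg_le[of p x] le_funD[of p q "- x"] by (auto simp: S_def)
      define m where "m x = (INF p\<in>C. p x)" for x
      have bdd: "bdd_below ((\<lambda>p. p x) ` C)" for x
        using lower by (intro bdd_belowI[of _ "- q (- x)"]) auto
      have "sublinear m"
        unfolding m_def using False CS chain bdd by (intro sublinear_INF_chain) (auto simp: S_def)
      moreover have "m \<le> p" if "p \<in> C" for p
        unfolding m_def le_fun_def using cINF_lower[OF bdd that] by blast
      moreover have "m \<le> q"
        using False CS \<open>\<And>p. p \<in> C \<Longrightarrow> m \<le> p\<close> by (auto simp: S_def intro: order_trans)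
      ultimately show ?thesis
        by (auto simp: S_def)
    qed
  qed
  then show ?thesis
    using that by (auto simp: S_def intro: order_trans)
qed

text \<open>If \<open>r \<le> p\<close> on \<open>D\<close>, this is a sublinear minorant of \<open>p\<close> that is at most \<open>-r\<close> in every
  direction of \<open>D\<close>; it yields both the linearity of minimal sublinear functionals and the
  separation theorem.\<close>
definition inf_along :: "('a::real_vector \<Rightarrow> real) \<Rightarrow> 'a set \<Rightarrow> real \<Rightarrow> 'a \<Rightarrow> real" where
  "inf_along p D r z = (INF (t, d)\<in>{0..} \<times> D. p (z + t *\<^sub>R d) - t * r)"

context
  fixes p :: "'a::real_vector \<Rightarrow> real" and D :: "'a set" and r :: real
  assumes p: "sublinear p" and D_ne: "D \<noteq> {}" and r_le: "\<And>d. d \<in> D \<Longrightarrow> r \<le> p d"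
begin

lemma inf_along_le:
  assumes "0 \<le> t" "d \<in> D"
  shows "inf_along p D r z \<le> p (z + t *\<^sub>R d) - t * r"
proof -
  have "- p (- z) \<le> p (z + t *\<^sub>R d) - t * r" if "0 \<le> t" "d \<in> D" for t d
  proof -
    have "t * r \<le> p (t *\<^sub>R d)"
      using r_le[OF that(2)] that(1) sublinear_scaleR_nonneg[OF p] by (simp add: mult_left_mono)
    also have "\<dots> \<le> p (z + t *\<^sub>R d) + p (- z)"
      using sublinear_add_le[OF p, of "z + t *\<^sub>R d" "- z"] by simp
    finally show ?thesis
      by simp
  qed
  then have "bdd_below ((\<lambda>(t, d). p (z + t *\<^sub>R d) - t * r) ` ({0..} \<times> D))"
    by (intro bdd_belowI[of _ "- p (- z)"]) auto
  from cINF_lower[OF this, of "(t, d)"] show ?thesis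
    unfolding inf_along_def using assms by simp
qed

lemma inf_along_greatest:
  assumes "\<And>t d. 0 \<le> t \<Longrightarrow> d \<in> D \<Longrightarrow> w \<le> p (z + t *\<^sub>R d) - t * r"
  shows "w \<le> inf_along p D r z"
  unfolding inf_along_def using D_ne assms by (intro cINF_greatest) auto

lemma inf_along_le_self: "inf_along p D r z \<le> p z"
  using inf_along_le[of 0] D_ne by auto

lemma inf_along_add_le:
  assumes "convex D"
  shows "inf_along p D r (u + v) \<le> inf_along p D r u + inf_along p D r v"
proof -
  let ?q = "inf_along p D r"
  have split: "?q (u + v) \<le> (p (u + t1 *\<^sub>R d1) - t1 * r) + (p (v + t2 *\<^sub>R d2) - t2 * r)"
    if t: "0 \<le> t1" "0 \<le> t2" and d: "d1 \<in> D" "d2 \<in> D" for t1 t2 d1 d2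
  proof (cases "t1 + t2 = 0")
    case True
    with t have "t1 = 0" "t2 = 0"
      by auto
    then show ?thesis
      using inf_along_le_self[of "u + v"] sublinear_add_le[OF p, of u v] by simp
  next
    case False
    with t have pos: "0 < t1 + t2"
      by simp
    define d where "d = (t1 / (t1 + t2)) *\<^sub>R d1 + (t2 / (t1 + t2)) *\<^sub>R d2"
    have "d \<in> D"
      unfolding d_def using t pos d by (intro convexD[OF assms]) (auto simp: add_divide_distrib[symmetric])
    have "(t1 + t2) *\<^sub>R d = t1 *\<^sub>R d1 + t2 *\<^sub>R d2"
      using pos by (simp add: d_def scaleR_add_right)
    then have "?q (u + v) \<le> p ((u + t1 *\<^sub>R d1) + (v + t2 *\<^sub>R d2)) - (t1 + t2) * r"
      using inf_along_le[of "t1 + t2" d "u + v"] t \<open>d \<in> D\<close> by (simp add: algebra_simps)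
    also have "\<dots> \<le> (p (u + t1 *\<^sub>R d1) - t1 * r) + (p (v + t2 *\<^sub>R d2) - t2 * r)"
      using sublinear_add_le[OF p, of "u + t1 *\<^sub>R d1" "v + t2 *\<^sub>R d2"] by (simp add: distrib_right)
    finally show ?thesis .
  qed
  have "?q (u + v) - (p (u + t1 *\<^sub>R d1) - t1 * r) \<le> ?q v" if "0 \<le> t1" "d1 \<in> D" for t1 d1
    using split[of t1] that by (intro inf_along_greatest) fastforce
  then have "?q (u + v) - ?q v \<le> ?q u"
    by (intro inf_along_greatest) (simp add: algebra_simps)
  then show ?thesis
    by simp
qed

lemma inf_along_scaleR:
  assumes a: "0 < a"
  shows "inf_along p D r (a *\<^sub>R u) = a * inf_along p D r u"
proof -
  have scale: "p (a *\<^sub>R u + t *\<^sub>R d) - t * r = a * (p (u + (t / a) *\<^sub>R d) - (t / a) * r)" for t d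
  proof -
    have "p (a *\<^sub>R u + t *\<^sub>R d) = a * p (u + (t / a) *\<^sub>R d)"
      using a sublinear_scaleR[OF p a, of "u + (t / a) *\<^sub>R d"] by (simp add: scaleR_add_right)
    then show ?thesis
      using a by (simp add: algebra_simps)
  qed
  have "inf_along p D r (a *\<^sub>R u) / a \<le> inf_along p D r u"
  proof (rule inf_along_greatest)
    fix t :: real and d assume "0 \<le> t" "d \<in> D"
    then show "inf_along p D r (a *\<^sub>R u) / a \<le> p (u + t *\<^sub>R d) - t * r"
      using inf_along_le[of "a * t" d "a *\<^sub>R u"] scale[of "a * t" d] a
      by (simp add: divide_le_eq mult.commute)
  qed
  moreover have "a * inf_along p D r u \<le> inf_along p D r (a *\<^sub>R u)"
  proof (rule inf_along_greatest)
    fix t :: real and d assume "0 \<le> t" "d \<in> D"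
    then show "a * inf_along p D r u \<le> p (a *\<^sub>R u + t *\<^sub>R d) - t * r"
      using inf_along_le[of "t / a" d u] scale[of t d] a by simp
  qed
  ultimately show ?thesis
    using a by (simp add: divide_le_eq mult.commute)
qed

lemma sublinear_inf_along:
  assumes "convex D"
  shows "sublinear (inf_along p D r)"
  using inf_along_add_le[OF assms] inf_along_scaleR by (intro sublinearI)

end

lemma linear_if_minimal_sublinear:
  fixes p :: "'a::real_vector \<Rightarrow> real"
  assumes p: "sublinear p" and minimal: "\<And>p'. sublinear p' \<Longrightarrow> p' \<le> p \<Longrightarrow> p' = p"
  shows "linear p"
proof -
  have neg: "p (- y) = - p y" for y
  proof -
    have y: "{y} \<noteq> {}" "\<And>d. d \<in> {y} \<Longrightarrow> p y \<le> p d"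
      by auto
    have "inf_along p {y} (p y) = p"
      using sublinear_inf_along[OF p y convex_singleton] inf_along_le_self[OF p y]
      by (intro minimal) (auto simp: le_fun_def)
    then have "p (- y) \<le> p (- y + 1 *\<^sub>R y) - 1 * p y"
      using inf_along_le[OF p y, of 1 y "- y"] by simp
    then show ?thesis
      using sublinear_neg_le[OF p, of y] sublinear_zero[OF p] by simp
  qed
  show ?thesis
  proof (rule linearI)
    fix x y
    have "p x \<le> p (x + y) + p (- y)"
      using sublinear_add_le[OF p, of "x + y" "- y"] by simp
    then show "p (x + y) = p x + p y"
      using sublinear_add_le[OF p, of x y] neg[of y] by simp
  next
    fix a :: real and x
    show "p (a *\<^sub>R x) = a *\<^sub>R p x"
    proof (cases "0 \<le> a")
      case True
      then show ?thesis
        using sublinear_scaleR_nonneg[OF p] by simp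
    next
      case False
      then have "p (a *\<^sub>R x) = - p ((- a) *\<^sub>R x)"
        using neg[of "(- a) *\<^sub>R x"] by simp
      then show ?thesis
        using False sublinear_scaleR[OF p, of "- a" x] by simp
    qed
  qed
qed

lemma sublinear_dominates_linear:
  fixes q :: "'a::real_vector \<Rightarrow> real"
  assumes "sublinear q"
  obtains g where "linear g" "g \<le> q"
  using exists_minimal_sublinear_below[OF assms] linear_if_minimal_sublinear by metis

lemma exists_separating_functional:
  fixes C :: "'a::real_normed_vector set"
  assumes "convex C" "C \<noteq> {}" and far: "\<And>c. c \<in> C \<Longrightarrow> r \<le> norm (c - x)"
  shows "\<exists>g. bounded_linear g \<and> (\<forall>c\<in>C. g x + r \<le> g c)"
proof -
  let ?D = "(\<lambda>c. c - x) ` C"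
  have D: "?D \<noteq> {}" "\<And>d. d \<in> ?D \<Longrightarrow> r \<le> norm d" "convex ?D"
    using assms by auto
  obtain g where g: "linear g" "g \<le> inf_along norm ?D r"
    using sublinear_dominates_linear[OF sublinear_inf_along[OF sublinear_norm D]] .
  have g_le: "g z \<le> norm z" for z
    using le_funD[OF g(2), of z] inf_along_le_self[OF sublinear_norm D(1,2), of z] by simp
  have "bounded_linear g"
  proof (rule bounded_linear_intro[where K = 1])
    show "g (x + y) = g x + g y" "g (a *\<^sub>R x) = a *\<^sub>R g x" for x y a
      using g(1) by (simp_all add: linear_add linear_scale)
    show "norm (g z) \<le> norm z * 1" for z
      using g_le[of z] g_le[of "- z"] linear_neg[OF g(1), of z] by simp
  qed
  moreover have "g x + r \<le> g c" if "c \<in> C" for c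
  proof -
    have "g (x - c) \<le> norm ((x - c) + 1 *\<^sub>R (c - x)) - 1 * r"
      using le_funD[OF g(2), of "x - c"] inf_along_le[OF sublinear_norm D(1,2), of 1 "c - x" "x - c"] that
      by simp
    then show ?thesis
      using linear_diff[OF g(1), of x c] by simp
  qed
  ultimately show ?thesis
    by blast
qed

definition dual_inner :: "('a \<Rightarrow> real) set \<Rightarrow> 'a \<Rightarrow> 'a \<Rightarrow> real" where
  "dual_inner F x y = (\<Sum>f\<in>F. f x * f y)"

lemma dual_inner_commute: "dual_inner F x y = dual_inner F y x"
  unfolding dual_inner_def by (simp add: mult.commute)

lemma dual_inner_nonneg: "0 \<le> dual_inner F x x"
  unfolding dual_inner_def by (simp add: sum_nonneg)

lemma bounded_linear_dual_inner:
  fixes F :: "('a::real_normed_vector \<Rightarrow> real) set"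
  assumes "\<And>f. f \<in> F \<Longrightarrow> bounded_linear f"
  shows "bounded_linear (dual_inner F x)"
  unfolding dual_inner_def using assms by (intro bounded_linear_sum bounded_linear_const_mult)

lemma square_le_dual_inner:
  assumes "finite F" "f \<in> F"
  shows "(f x)\<^sup>2 \<le> dual_inner F x x"
  unfolding dual_inner_def power2_eq_square using assms
  by (intro member_le_sum) auto

lemma abs_less_if_dual_inner_less:
  assumes "finite F" "f \<in> F" "dual_inner F x x < \<delta>\<^sup>2" "0 < \<delta>"
  shows "\<bar>f x\<bar> < \<delta>"
proof (rule power2_less_imp_less)
  show "\<bar>f x\<bar>\<^sup>2 < \<delta>\<^sup>2"
    using square_le_dual_inner[OF assms(1,2), of x] assms(3) by simp
qed (use assms(4) in simp)

lemma dual_inner_diff_scaleR: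
  assumes "\<And>f. f \<in> F \<Longrightarrow> linear f"
  shows "dual_inner F (x - t *\<^sub>R y) (x - t *\<^sub>R y)
    = dual_inner F x x - 2 * t * dual_inner F x y + t\<^sup>2 * dual_inner F y y"
proof -
  have "f (x - t *\<^sub>R y) * f (x - t *\<^sub>R y) = f x * f x - 2 * t * (f x * f y) + t\<^sup>2 * (f y * f y)"
    if "f \<in> F" for f
    using assms[OF that] by (simp add: linear_diff linear_scale power2_eq_square algebra_simps)
  then show ?thesis
    unfolding dual_inner_def
    by (simp add: sum_subtractf sum.distrib sum_distrib_left)
qed

lemma dual_inner_bounded_on:
  fixes F :: "('a::real_normed_vector \<Rightarrow> real) set"
  assumes "\<And>f. f \<in> F \<Longrightarrow> bounded_linear f" "bounded S"
  shows "\<exists>K. \<forall>x\<in>S. dual_inner F x x \<le> K"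
proof -
  have "\<forall>f\<in>F. \<exists>M. \<forall>x\<in>S. \<bar>f x\<bar> \<le> M"
    using bounded_linear_image[OF assms(2)] assms(1) by (fastforce simp: bounded_iff)
  then obtain M where M: "\<And>f x. f \<in> F \<Longrightarrow> x \<in> S \<Longrightarrow> \<bar>f x\<bar> \<le> M f"
    by metis
  have "dual_inner F x x \<le> (\<Sum>f\<in>F. M f * M f)" if "x \<in> S" for x
    unfolding dual_inner_def using M[OF _ that]
    by (intro sum_mono) (metis abs_ge_zero abs_mult_self_eq mult_mono')
  then show ?thesis
    by blast
qed

lemma dual_inner_bounded_diff:
  fixes F :: "('a::real_normed_vector \<Rightarrow> real) set"
  assumes "\<And>f. f \<in> F \<Longrightarrow> bounded_linear f" "bounded S"
  shows "\<exists>R. \<forall>c\<in>S. \<forall>c'\<in>S. dual_inner F (c' - c) (c' - c) \<le> R"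
proof -
  from dual_inner_bounded_on[OF assms(1) bounded_differences[OF assms(2) assms(2)]]
  obtain R where R: "\<forall>v\<in>(\<Union>y\<in>S. \<Union>z\<in>S. {y - z}). dual_inner F v v \<le> R" ..
  have "dual_inner F (c' - c) (c' - c) \<le> R" if "c \<in> S" "c' \<in> S" for c c'
  proof -
    have "c' - c \<in> (\<Union>y\<in>S. \<Union>z\<in>S. {y - z})"
      using that by auto
    then show ?thesis
      using R by blast
  qed
  then show ?thesis
    by blast
qed

lemma dual_inner_step_bound:
  assumes F: "\<And>f. f \<in> F \<Longrightarrow> linear f" and t: "0 < t" "t * R \<le> d / 4"
    and step: "d \<le> dual_inner F (x - (c + t *\<^sub>R (c' - c))) (x - (c + t *\<^sub>R (c' - c)))"
    and near: "dual_inner F (x - c) (x - c) < d + t * d / 4"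
    and diam: "dual_inner F (c' - c) (c' - c) \<le> R"
  shows "dual_inner F (x - c) (c' - c) < d / 4"
proof -
  let ?w = "x - c" and ?v = "c' - c"
  have "x - (c + t *\<^sub>R ?v) = ?w - t *\<^sub>R ?v"
    by (simp add: algebra_simps)
  with step have "d \<le> dual_inner F ?w ?w - 2 * t * dual_inner F ?w ?v + t\<^sup>2 * dual_inner F ?v ?v"
    using dual_inner_diff_scaleR[OF F] by metis
  also have "t\<^sup>2 * dual_inner F ?v ?v \<le> t * (d / 4)"
    using mult_left_mono[OF order_trans[OF mult_left_mono[OF diam] t(2)], of t] t(1)
    by (simp add: power2_eq_square mult.assoc)
  finally have "t * dual_inner F ?w ?v < t * (d / 4)"
    using near by linarith
  then show ?thesis
    using t(1) by simp
qed

text \<open>An almost nearest point \<open>c\<close> of \<open>D\<close> to \<open>x\<close> gives the separating direction \<open>x - c\<close>.\<close>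
lemma dual_inner_separation:
  fixes F :: "('a::real_normed_vector \<Rightarrow> real) set"
  assumes F: "\<And>f. f \<in> F \<Longrightarrow> bounded_linear f" and D: "convex D" "D \<noteq> {}" "bounded D"
    and far: "0 < \<delta>" "\<And>c. c \<in> D \<Longrightarrow> \<delta> \<le> dual_inner F (x - c) (x - c)"
  shows "\<exists>w \<gamma>. 0 < \<gamma> \<and> (\<forall>c\<in>D. dual_inner F w c + \<gamma> \<le> dual_inner F w x)"
proof -
  have lin: "\<And>f. f \<in> F \<Longrightarrow> linear f" "\<And>y. linear (dual_inner F y)"
    using F bounded_linear_dual_inner[OF F] by (auto intro: bounded_linear.linear)
  obtain R where diam: "\<forall>c\<in>D. \<forall>c'\<in>D. dual_inner F (c' - c) (c' - c) \<le> R"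
    using dual_inner_bounded_diff[OF F D(3)] by blast
  then have "0 \<le> R"
    using D(2) dual_inner_nonneg by (metis all_not_in_conv order_trans)
  define d where "d = (INF c\<in>D. dual_inner F (x - c) (x - c))"
  have bdd: "bdd_below ((\<lambda>c. dual_inner F (x - c) (x - c)) ` D)"
    by (intro bdd_belowI[of _ 0]) (auto simp: dual_inner_nonneg)
  have d_le: "d \<le> dual_inner F (x - c) (x - c)" if "c \<in> D" for c
    unfolding d_def using bdd that by (rule cINF_lower)
  have "\<delta> \<le> d"
    unfolding d_def using D(2) far(2) by (rule cINF_greatest)
  with far(1) have "0 < d"
    by simp
  define t where "t = min 1 (d / (4 * (R + 1)))"
  have t: "0 < t" "t \<le> 1"
    using \<open>0 < d\<close> \<open>0 \<le> R\<close> by (auto simp: t_def)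
  have "t * R \<le> d / (4 * (R + 1)) * (R + 1)"
    using \<open>0 \<le> R\<close> t by (intro mult_mono) (auto simp: t_def)
  also have "\<dots> = d / 4"
    using \<open>0 \<le> R\<close> by (simp add: field_simps)
  finally have tR: "t * R \<le> d / 4" .
  obtain c where c: "c \<in> D" "dual_inner F (x - c) (x - c) < d + t * d / 4"
    using cINF_less_iff[OF D(2) bdd, of "d + t * d / 4"] \<open>0 < d\<close> t(1) by (auto simp: d_def[symmetric])
  have "dual_inner F (x - c) c' + d / 2 \<le> dual_inner F (x - c) x" if "c' \<in> D" for c'
  proof -
    have "c + t *\<^sub>R (c' - c) \<in> D"
      using convexD[OF D(1) c(1) that, of "1 - t" t] t by (simp add: algebra_simps)
    then have "dual_inner F (x - c) (c' - c) < d / 4"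
      using dual_inner_step_bound[OF lin(1) t(1) tR d_le c(2)] diam c(1) that by blast
    moreover have "dual_inner F (x - c) x - dual_inner F (x - c) c'
        = dual_inner F (x - c) (x - c) - dual_inner F (x - c) (c' - c)"
      using linear_diff[OF lin(2)] by (metis diff_diff_eq2 diff_add_cancel)
    ultimately show ?thesis
      using d_le[OF c(1)] \<open>0 < d\<close> by linarith
  qed
  then show ?thesis
    using \<open>0 < d\<close> by (intro exI[of _ "x - c"] exI[of _ "d / 2"]) auto
qed

definition small_slice_points :: "'a::real_normed_vector set \<Rightarrow> ('a \<Rightarrow> real) set \<Rightarrow> real \<Rightarrow> 'a set" where
  "small_slice_points A F \<epsilon> = {e \<in> A. \<exists>l \<eta>. bounded_linear l \<and> 0 < \<eta> \<and>
     (\<forall>y\<in>slice A l \<eta>. dual_inner F (y - e) (y - e) < \<epsilon>)}"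

text \<open>If \<open>e\<close> almost maximises \<open>g + Q/2\<close> on \<open>A\<close>, where \<open>Q\<close> is the quadratic form of
  \<open>dual_inner\<close>, then, as this function exceeds its linearisation \<open>l\<close> at \<open>e\<close> by \<open>Q (y - e) / 2\<close>,
  the slice of \<open>A\<close> cut out by \<open>l\<close> stays \<open>Q\<close>-close to \<open>e\<close>.\<close>
lemma small_slice_point_if_almost_max:
  fixes A :: "'a::real_normed_vector set" and F :: "('a \<Rightarrow> real) set"
  assumes A: "bounded A" "e \<in> A" and F: "\<And>f. f \<in> F \<Longrightarrow> bounded_linear f"
    and g: "bounded_linear g" and "0 < \<epsilon>"
    and almost_max: "\<And>y. y \<in> A \<Longrightarrow> g y + dual_inner F y y / 2 < g e + dual_inner F e e / 2 + \<epsilon> / 4"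
  shows "e \<in> small_slice_points A F \<epsilon>"
proof -
  define l where "l y = g y + dual_inner F e y" for y
  have l: "bounded_linear l"
    unfolding l_def by (intro bounded_linear_add g bounded_linear_dual_inner F)
  have "bdd_above (l ` A)"
    using bounded_linear_image[OF A(1) l] by (rule bounded_imp_bdd_above)
  then have "l e \<le> Sup (l ` A)"
    using cSup_upper[OF imageI[OF A(2)]] by blast
  define \<eta> where "\<eta> = Sup (l ` A) - l e + \<epsilon> / 4"
  have "0 < \<eta>"
    using \<open>l e \<le> Sup (l ` A)\<close> \<open>0 < \<epsilon>\<close> by (simp add: \<eta>_def)
  moreover have "dual_inner F (y - e) (y - e) < \<epsilon>" if "y \<in> slice A l \<eta>" for y
  proof -
    have y: "y \<in> A" "l e - \<epsilon> / 4 < l y"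
      using that by (auto simp: slice_def \<eta>_def)
    have "dual_inner F (y - e) (y - e) = dual_inner F y y - 2 * dual_inner F e y + dual_inner F e e"
      using dual_inner_diff_scaleR[OF bounded_linear.linear[OF F], where x = y and t = 1 and y = e]
        dual_inner_commute[of F y e]
      by simp
    then show ?thesis
      using almost_max[OF y(1)] y(2) unfolding l_def by linarith
  qed
  ultimately show ?thesis
    using A(2) l unfolding small_slice_points_def by blast
qed

lemma exists_small_slice_point_almost_max:
  fixes A :: "'a::real_normed_vector set" and F :: "('a \<Rightarrow> real) set"
  assumes A: "A \<noteq> {}" "bounded A" and F: "\<And>f. f \<in> F \<Longrightarrow> bounded_linear f"
    and g: "bounded_linear g" and "0 < \<epsilon>"
  shows "\<exists>e\<in>small_slice_points A F \<epsilon>.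
    \<forall>y\<in>A. g y + dual_inner F y y / 2 < g e + dual_inner F e e / 2 + \<epsilon> / 4"
proof -
  define h where "h y = g y + dual_inner F y y / 2" for y
  obtain K where K: "\<And>y. y \<in> A \<Longrightarrow> dual_inner F y y \<le> K"
    using dual_inner_bounded_on[OF F A(2)] by blast
  have "bdd_above (g ` A)"
    using bounded_linear_image[OF A(2) g] by (rule bounded_imp_bdd_above)
  then have "h y \<le> Sup (g ` A) + K / 2" if "y \<in> A" for y
    using cSup_upper[of "g y" "g ` A"] K[OF that] that by (simp add: h_def)
  then have bdd_h: "bdd_above (h ` A)"
    by (intro bdd_aboveI[of _ "Sup (g ` A) + K / 2"]) auto
  obtain e where e: "e \<in> A" "Sup (h ` A) - \<epsilon> / 4 < h e"
    using less_cSup_iff[OF _ bdd_h, of "Sup (h ` A) - \<epsilon> / 4"] A(1) \<open>0 < \<epsilon>\<close> by auto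
  have "h y < h e + \<epsilon> / 4" if "y \<in> A" for y
    using cSup_upper[OF _ bdd_h, of "h y"] that e(2) by auto
  then have "\<forall>y\<in>A. g y + dual_inner F y y / 2 < g e + dual_inner F e e / 2 + \<epsilon> / 4"
    unfolding h_def by auto
  with small_slice_point_if_almost_max[OF A(2) e(1) F g \<open>0 < \<epsilon>\<close>] show ?thesis
    by blast
qed

text \<open>Otherwise \<open>x\<close> is strictly separated from the hull by some \<open>w\<close>; an almost maximiser of
  \<open>\<tau> \<langle>w, \<cdot>\<rangle> + Q/2\<close> with \<open>\<tau>\<close> large is a small slice point on the far side of the separation.\<close>
lemma dual_inner_near_hull_small_slice_points:
  fixes A :: "'a::real_normed_vector set" and F :: "('a \<Rightarrow> real) set"
  assumes A: "convex A" "bounded A" "x \<in> A" and F: "\<And>f. f \<in> F \<Longrightarrow> bounded_linear f" and "0 < \<epsilon>"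
  shows "\<exists>c\<in>convex hull (small_slice_points A F \<epsilon>). dual_inner F (x - c) (x - c) < \<epsilon>"
proof (rule ccontr)
  let ?E = "small_slice_points A F \<epsilon>"
  assume "\<not> ?thesis"
  then have far: "\<And>c. c \<in> convex hull ?E \<Longrightarrow> \<epsilon> \<le> dual_inner F (x - c) (x - c)"
    by (auto simp: not_less)
  have "A \<noteq> {}"
    using A(3) by blast
  have "convex hull ?E \<subseteq> A"
    using A(1) by (intro hull_minimal) (auto simp: small_slice_points_def)
  then have "bounded (convex hull ?E)"
    by (rule bounded_subset[OF A(2)])
  obtain e0 where "e0 \<in> ?E"
    using exists_small_slice_point_almost_max[OF \<open>A \<noteq> {}\<close> A(2) F bounded_linear_zero \<open>0 < \<epsilon>\<close>]
    by blast
  then have "convex hull ?E \<noteq> {}"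
    using hull_inc[of e0 ?E] by blast
  then obtain w \<gamma> where "0 < \<gamma>"
      and sep: "\<forall>c\<in>convex hull ?E. dual_inner F w c + \<gamma> \<le> dual_inner F w x"
    using dual_inner_separation[OF F convex_convex_hull _ \<open>bounded (convex hull ?E)\<close> \<open>0 < \<epsilon>\<close> far]
    by blast
  obtain K where K: "\<And>y. y \<in> A \<Longrightarrow> dual_inner F y y \<le> K"
    using dual_inner_bounded_on[OF F A(2)] by blast
  define \<tau> where "\<tau> = (\<bar>K\<bar> + \<epsilon>) / \<gamma>"
  have "0 < \<tau>" and \<tau>\<gamma>: "\<tau> * \<gamma> = \<bar>K\<bar> + \<epsilon>"
    using \<open>0 < \<gamma>\<close> \<open>0 < \<epsilon>\<close> by (auto simp: \<tau>_def)
  have "bounded_linear (\<lambda>z. \<tau> * dual_inner F w z)"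
    using bounded_linear_dual_inner[OF F] by (rule bounded_linear_const_mult)
  from exists_small_slice_point_almost_max[OF \<open>A \<noteq> {}\<close> A(2) F this \<open>0 < \<epsilon>\<close>]
  obtain e where "e \<in> ?E" and e: "\<forall>y\<in>A. \<tau> * dual_inner F w y + dual_inner F y y / 2
      < \<tau> * dual_inner F w e + dual_inner F e e / 2 + \<epsilon> / 4" ..
  have "\<tau> * \<gamma> \<le> \<tau> * (dual_inner F w x - dual_inner F w e)"
    using bspec[OF sep hull_inc[OF \<open>e \<in> ?E\<close>]] \<open>0 < \<tau>\<close> by (intro mult_left_mono) auto
  moreover have "dual_inner F e e \<le> K"
    using K \<open>e \<in> ?E\<close> by (auto simp: small_slice_points_def)
  ultimately show False
    using e[rule_format, OF A(3)] \<tau>\<gamma> dual_inner_nonneg[of F x] abs_ge_self[of K] \<open>0 < \<epsilon>\<close>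
    by (simp add: algebra_simps)
qed

lemma linear_convex_combination_close:
  fixes f :: "'a::real_vector \<Rightarrow> real"
  assumes f: "linear f" and u: "\<And>i. i \<in> S \<Longrightarrow> 0 \<le> u i" "sum u S = 1"
    and close: "\<And>i. i \<in> S \<Longrightarrow> \<bar>f (y i) - f (e i)\<bar> \<le> \<delta>"
  shows "\<bar>f (\<Sum>i\<in>S. u i *\<^sub>R y i) - f (\<Sum>i\<in>S. u i *\<^sub>R e i)\<bar> \<le> \<delta>"
proof -
  have "f (\<Sum>i\<in>S. u i *\<^sub>R y i) - f (\<Sum>i\<in>S. u i *\<^sub>R e i) = (\<Sum>i\<in>S. u i * (f (y i) - f (e i)))"
    by (simp add: linear_sum[OF f] linear_scale[OF f] sum_subtractf right_diff_distrib)
  also have "\<bar>\<dots>\<bar> \<le> (\<Sum>i\<in>S. u i * \<delta>)"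
    using u(1) close
    by (intro order_trans[OF sum_abs sum_mono]) (simp add: abs_mult mult_left_mono)
  also have "\<dots> = \<delta>"
    using u(2) by (simp add: sum_distrib_right[symmetric])
  finally show ?thesis .
qed

definition weak_nbhd :: "('a \<Rightarrow> real) set \<Rightarrow> real \<Rightarrow> 'a \<Rightarrow> 'a set" where
  "weak_nbhd F \<epsilon> x = {y. \<forall>f\<in>F. \<bar>f y - f x\<bar> < \<epsilon>}"

lemma topspace_weak_topology: "topspace (weak_topology :: 'a::real_normed_vector topology) = UNIV"
proof -
  have "(\<lambda>x::'a. 0::real) -` UNIV \<in> {f -` V | f V. bounded_linear (f :: 'a \<Rightarrow> real) \<and> open V}"
    by (intro CollectI exI[of _ "\<lambda>x::'a. 0::real"] exI[of _ UNIV]) auto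
  then show ?thesis
    unfolding weak_topology_def topology_generated_by_topspace by auto
qed

lemma openin_weak_topology_halfspace:
  fixes g :: "'a::real_normed_vector \<Rightarrow> real"
  assumes "bounded_linear g"
  shows "openin weak_topology {y. g y < c}"
proof -
  have "{y. g y < c} = g -` {..<c}"
    by auto
  also have "\<dots> \<in> {f -` V | f V. bounded_linear (f :: 'a \<Rightarrow> real) \<and> open V}"
    using assms by (intro CollectI exI[of _ g] exI[of _ "{..<c}"]) simp
  finally show ?thesis
    unfolding weak_topology_def by (rule topology_generated_by_Basis)
qed

lemma openin_weak_topology_contains_weak_nbhd:
  fixes U :: "'a::real_normed_vector set"
  assumes "openin weak_topology U" "x \<in> U"
  shows "\<exists>F \<epsilon>. finite F \<and> (\<forall>f\<in>F. bounded_linear f) \<and> 0 < \<epsilon> \<and> weak_nbhd F \<epsilon> x \<subseteq> U"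
proof -
  have "generate_topology_on {f -` V | f V. bounded_linear (f :: 'a \<Rightarrow> real) \<and> open V} U"
    using assms(1) unfolding weak_topology_def openin_topology_generated_by_iff .
  then show ?thesis
    using assms(2)
  proof (induction arbitrary: x rule: generate_topology_on.induct)
    case Empty
    then show ?case
      by simp
  next
    case (Int U1 U2)
    from Int.IH(1)[OF IntD1[OF Int.prems]] obtain F1 \<epsilon>1 where
      "finite F1" "\<forall>f\<in>F1. bounded_linear f" "0 < \<epsilon>1" "weak_nbhd F1 \<epsilon>1 x \<subseteq> U1"
      by blast
    moreover from Int.IH(2)[OF IntD2[OF Int.prems]] obtain F2 \<epsilon>2 where
      "finite F2" "\<forall>f\<in>F2. bounded_linear f" "0 < \<epsilon>2" "weak_nbhd F2 \<epsilon>2 x \<subseteq> U2"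
      by blast
    ultimately show ?case
      by (intro exI[of _ "F1 \<union> F2"] exI[of _ "min \<epsilon>1 \<epsilon>2"]) (auto simp: weak_nbhd_def)
  next
    case (UN K)
    then obtain k where "k \<in> K" "x \<in> k"
      by blast
    with UN.IH[of k x] show ?case
      by blast
  next
    case (Basis s)
    then have "\<exists>(f :: 'a \<Rightarrow> real) V. s = f -` V \<and> bounded_linear f \<and> open V"
      by simp
    then obtain f :: "'a \<Rightarrow> real" and V where fV: "s = f -` V" "bounded_linear f" "open V"
      by blast
    with Basis.prems obtain \<epsilon> where "0 < \<epsilon>" "ball (f x) \<epsilon> \<subseteq> V"
      using open_contains_ball by blast
    have "weak_nbhd {f} \<epsilon> x \<subseteq> s"
    proof
      fix y assume "y \<in> weak_nbhd {f} \<epsilon> x"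
      then have "f y \<in> ball (f x) \<epsilon>"
        by (simp add: weak_nbhd_def dist_real_def abs_minus_commute)
      then show "y \<in> s"
        using fV(1) \<open>ball (f x) \<epsilon> \<subseteq> V\<close> by blast
    qed
    then show ?case
      using fV(2) \<open>0 < \<epsilon>\<close> by (intro exI[of _ "{f}"] exI[of _ \<epsilon>]) auto
  qed
qed

lemma subset_closure_if_meets_weakly_open:
  fixes A C :: "'a::real_normed_vector set"
  assumes "convex C"
    and meets: "\<And>V. openin (subtopology weak_topology A) V \<Longrightarrow> V \<noteq> {} \<Longrightarrow> C \<inter> V \<noteq> {}"
  shows "A \<subseteq> closure C"
proof
  fix x assume "x \<in> A"
  show "x \<in> closure C"
  proof (rule ccontr)
    assume "x \<notin> closure C"
    then obtain r where "0 < r" and far: "\<And>c. c \<in> C \<Longrightarrow> r \<le> norm (c - x)"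
      unfolding closure_approachable by (auto simp: dist_norm not_less)
    have "openin (subtopology weak_topology A) A"
      by (simp add: openin_subtopology_refl topspace_weak_topology)
    then have "C \<noteq> {}"
      using meets \<open>x \<in> A\<close> by blast
    then obtain g where g: "bounded_linear g" "\<forall>c\<in>C. g x + r \<le> g c"
      using exists_separating_functional[OF \<open>convex C\<close> _ far] by blast
    have "openin (subtopology weak_topology A) (A \<inter> {y. g y < g x + r})"
      using openin_weak_topology_halfspace[OF g(1)] by (auto simp: openin_subtopology)
    moreover have "x \<in> A \<inter> {y. g y < g x + r}"
      using \<open>x \<in> A\<close> \<open>0 < r\<close> by simp
    ultimately obtain c where "c \<in> C" "g c < g x + r"
      using meets by blast
    then show False
      using g(2) by fastforce
  qed
qed

definition admissible_slices :: "(('a::real_normed_vector \<Rightarrow> real) \<times> real) set \<Rightarrow> bool" where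
  "admissible_slices \<S> \<longleftrightarrow> (\<forall>(g, \<eta>)\<in>\<S>. bounded_linear g \<and> 0 < \<eta>)"

definition slices_force :: "'a::real_normed_vector set \<Rightarrow> (('a \<Rightarrow> real) \<times> real) set \<Rightarrow> 'a set \<Rightarrow> bool"
  where "slices_force A \<S> U \<longleftrightarrow>
    (\<forall>B. (\<forall>(g, \<eta>)\<in>\<S>. B \<inter> slice A g \<eta> \<noteq> {}) \<longrightarrow> convex hull B \<inter> U \<noteq> {})"

lemma slices_forceD:
  "slices_force A \<S> U \<Longrightarrow> \<forall>(g, \<eta>)\<in>\<S>. B \<inter> slice A g \<eta> \<noteq> {} \<Longrightarrow> convex hull B \<inter> U \<noteq> {}"
  unfolding slices_force_def by blast

lemma slices_force_mono: "slices_force A \<S> U \<Longrightarrow> U \<subseteq> U' \<Longrightarrow> slices_force A \<S> U'"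
  unfolding slices_force_def by blast

lemma convex_combination_in_weak_nbhd:
  fixes F :: "('a::real_normed_vector \<Rightarrow> real) set"
  assumes F: "finite F" "\<And>f. f \<in> F \<Longrightarrow> bounded_linear f" and "0 < \<delta>"
    and u: "\<And>e. e \<in> S \<Longrightarrow> 0 \<le> u e" "sum u S = 1"
    and close: "\<And>e. e \<in> S \<Longrightarrow> dual_inner F (y e - e) (y e - e) < \<delta>\<^sup>2"
    and x: "dual_inner F (x - (\<Sum>e\<in>S. u e *\<^sub>R e)) (x - (\<Sum>e\<in>S. u e *\<^sub>R e)) < \<delta>\<^sup>2"
  shows "(\<Sum>e\<in>S. u e *\<^sub>R y e) \<in> weak_nbhd F (2 * \<delta>) x"
proof -
  have "\<bar>f (\<Sum>e\<in>S. u e *\<^sub>R y e) - f x\<bar> < 2 * \<delta>" if "f \<in> F" for f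
  proof -
    have f: "linear f"
      using F(2)[OF that] by (rule bounded_linear.linear)
    have "\<bar>f (y e) - f e\<bar> \<le> \<delta>" if "e \<in> S" for e
      using abs_less_if_dual_inner_less[OF F(1) \<open>f \<in> F\<close> close[OF that] \<open>0 < \<delta>\<close>]
      by (simp add: linear_diff[OF f])
    then have "\<bar>f (\<Sum>e\<in>S. u e *\<^sub>R y e) - f (\<Sum>e\<in>S. u e *\<^sub>R e)\<bar> \<le> \<delta>"
      using u by (intro linear_convex_combination_close[OF f])
    moreover have "\<bar>f x - f (\<Sum>e\<in>S. u e *\<^sub>R e)\<bar> < \<delta>"
      using abs_less_if_dual_inner_less[OF F(1) that x \<open>0 < \<delta>\<close>] by (simp add: linear_diff[OF f])
    ultimately show ?thesis
      by linarith
  qed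
  then show ?thesis
    by (simp add: weak_nbhd_def)
qed

text \<open>Bourgain's lemma. The slices are those around the small slice points of a convex combination
  approximating \<open>x\<close> in the seminorm of \<open>dual_inner\<close>.\<close>
lemma exists_slices_force_weak_nbhd:
  fixes A :: "'a::real_normed_vector set" and F :: "('a \<Rightarrow> real) set"
  assumes A: "convex A" "bounded A" "x \<in> A" and F: "finite F" "\<And>f. f \<in> F \<Longrightarrow> bounded_linear f"
    and "0 < \<delta>"
  shows "\<exists>\<S>. finite \<S> \<and> admissible_slices \<S> \<and> slices_force A \<S> (A \<inter> weak_nbhd F (2 * \<delta>) x)"
proof -
  let ?E = "small_slice_points A F (\<delta>\<^sup>2)"
  obtain c where "c \<in> convex hull ?E" and c: "dual_inner F (x - c) (x - c) < \<delta>\<^sup>2"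
    using dual_inner_near_hull_small_slice_points[where F = F and \<epsilon> = "\<delta>\<^sup>2", OF A F(2)] \<open>0 < \<delta>\<close>
    by auto
  then obtain S u where S: "finite S" "S \<subseteq> ?E" "\<And>e. e \<in> S \<Longrightarrow> 0 \<le> u e" "sum u S = 1"
    and c_eq: "(\<Sum>e\<in>S. u e *\<^sub>R e) = c"
    unfolding convex_hull_explicit by blast
  have "\<forall>e\<in>S. \<exists>s. bounded_linear (fst s) \<and> 0 < snd s \<and>
      (\<forall>y\<in>slice A (fst s) (snd s). dual_inner F (y - e) (y - e) < \<delta>\<^sup>2)"
    using S(2) by (fastforce simp: small_slice_points_def)
  from bchoice[OF this] obtain s where s: "\<forall>e\<in>S. bounded_linear (fst (s e)) \<and> 0 < snd (s e) \<and>
      (\<forall>y\<in>slice A (fst (s e)) (snd (s e)). dual_inner F (y - e) (y - e) < \<delta>\<^sup>2)" ..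
  have "slices_force A (s ` S) (A \<inter> weak_nbhd F (2 * \<delta>) x)"
    unfolding slices_force_def
  proof (intro allI impI)
    fix B assume "\<forall>(g, \<eta>)\<in>s ` S. B \<inter> slice A g \<eta> \<noteq> {}"
    then have "\<forall>e\<in>S. \<exists>y. y \<in> B \<inter> slice A (fst (s e)) (snd (s e))"
      by (auto simp: case_prod_beta)
    from bchoice[OF this] obtain y where y: "\<forall>e\<in>S. y e \<in> B \<inter> slice A (fst (s e)) (snd (s e))" ..
    have "(\<Sum>e\<in>S. u e *\<^sub>R y e) \<in> convex hull B"
      using S y by (intro convex_sum convex_convex_hull) (auto intro: hull_inc)
    moreover have "(\<Sum>e\<in>S. u e *\<^sub>R y e) \<in> A"
      using S y A(1) by (intro convex_sum) (auto simp: slice_def)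
    moreover have "(\<Sum>e\<in>S. u e *\<^sub>R y e) \<in> weak_nbhd F (2 * \<delta>) x"
      using s y c c_eq by (intro convex_combination_in_weak_nbhd[OF F \<open>0 < \<delta>\<close> S(3,4)]) auto
    ultimately show "convex hull B \<inter> (A \<inter> weak_nbhd F (2 * \<delta>) x) \<noteq> {}"
      by blast
  qed
  moreover have "admissible_slices (s ` S)"
    using s by (auto simp: admissible_slices_def)
  ultimately show ?thesis
    using S(1) by blast
qed

lemma exists_slices_force_weakly_open:
  fixes A :: "'a::real_normed_vector set"
  assumes "convex A" "bounded A" and U: "openin (subtopology weak_topology A) U" "U \<noteq> {}"
  shows "\<exists>\<S>. finite \<S> \<and> admissible_slices \<S> \<and> slices_force A \<S> U"
proof -
  obtain x V where "x \<in> U" "openin weak_topology V" "U = V \<inter> A"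
    using U unfolding openin_subtopology by blast
  then have "x \<in> V"
    by blast
  from openin_weak_topology_contains_weak_nbhd[OF \<open>openin weak_topology V\<close> this]
  obtain F \<epsilon> where F: "finite F" "\<forall>f\<in>F. bounded_linear f" "0 < \<epsilon>" "weak_nbhd F \<epsilon> x \<subseteq> V"
    by blast
  have "x \<in> A" and sub: "A \<inter> weak_nbhd F (2 * (\<epsilon> / 2)) x \<subseteq> U"
    using \<open>x \<in> U\<close> \<open>U = V \<inter> A\<close> F(4) by auto
  have "\<And>f. f \<in> F \<Longrightarrow> bounded_linear f" "0 < \<epsilon> / 2"
    using F(2,3) by auto
  from exists_slices_force_weak_nbhd[OF assms(1,2) \<open>x \<in> A\<close> F(1) this]
  obtain \<S> where "finite \<S> \<and> admissible_slices \<S> \<and> slices_force A \<S> (A \<inter> weak_nbhd F (2 * (\<epsilon> / 2)) x)" ..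
  then show ?thesis
    using slices_force_mono[OF _ sub] by blast
qed

text \<open>The family of slices is padded with a dummy slice so that it can be enumerated even when
  it is empty.\<close>
lemma SCD_set_if_countable_slices:
  fixes A :: "'a::real_normed_vector set"
  assumes "countable \<S>" and "admissible_slices \<S>"
    and dense: "\<And>B. B \<subseteq> A \<Longrightarrow> \<forall>(g, \<eta>)\<in>\<S>. B \<inter> slice A g \<eta> \<noteq> {} \<Longrightarrow>
      A \<subseteq> closure (convex hull B)"
  shows "SCD_set A"
proof -
  define \<S>' where "\<S>' = insert (\<lambda>x. 0, 1) \<S>"
  have "countable \<S>'" "\<S>' \<noteq> {}"
    using \<open>countable \<S>\<close> by (auto simp: \<S>'_def)
  define f where "f n = fst (from_nat_into \<S>' n)" for n
  define e where "e n = snd (from_nat_into \<S>' n)" for n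
  show ?thesis
    unfolding SCD_set_def
  proof (intro exI[of _ f] exI[of _ e] conjI allI impI)
    have "bounded_linear (f n) \<and> 0 < e n" for n
      using from_nat_into[OF \<open>\<S>' \<noteq> {}\<close>, of n] \<open>admissible_slices \<S>\<close>
      by (cases "from_nat_into \<S>' n") (auto simp: \<S>'_def f_def e_def admissible_slices_def)
    then show "bounded_linear (f n)" "0 < e n" for n
      by auto
  next
    fix B assume B: "B \<subseteq> A \<and> (\<forall>n. B \<inter> slice A (f n) (e n) \<noteq> {})"
    have "B \<inter> slice A g \<eta> \<noteq> {}" if g\<eta>: "(g, \<eta>) \<in> \<S>" for g \<eta>
    proof -
      obtain n where "from_nat_into \<S>' n = (g, \<eta>)"
        using from_nat_into_surj[OF \<open>countable \<S>'\<close>, of "(g, \<eta>)"] g\<eta> by (auto simp: \<S>'_def)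
      then have "f n = g" "e n = \<eta>"
        by (simp_all add: f_def e_def)
      then show ?thesis
        using B[THEN conjunct2, rule_format, of n] by simp
    qed
    then show "A \<subseteq> closure (convex hull B)"
      using dense B by blast
  qed
qed

lemma SCD_set_if_pi_base_forced_by_slices:
  fixes A :: "'a::real_normed_vector set"
  assumes "countable P" and P: "pi_base (subtopology weak_topology A) P"
    and forced: "\<And>U. U \<in> P \<Longrightarrow> \<exists>\<S>. finite \<S> \<and> admissible_slices \<S> \<and> slices_force A \<S> U"
  shows "SCD_set A"
proof -
  have "\<forall>U\<in>P. \<exists>\<S>. finite \<S> \<and> admissible_slices \<S> \<and> slices_force A \<S> U"
    using forced by (rule ballI)
  from bchoice[OF this] obtain \<S> where
    \<S>: "\<forall>U\<in>P. finite (\<S> U) \<and> admissible_slices (\<S> U) \<and> slices_force A (\<S> U) U" ..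
  show ?thesis
  proof (rule SCD_set_if_countable_slices)
    show "countable (\<Union>U\<in>P. \<S> U)"
      using \<S> by (intro countable_UN[OF \<open>countable P\<close>] countable_finite) blast
    show "admissible_slices (\<Union>U\<in>P. \<S> U)"
      using \<S> by (auto simp: admissible_slices_def)
  next
    fix B assume "B \<subseteq> A" and "\<forall>(g, \<eta>)\<in>\<Union>U\<in>P. \<S> U. B \<inter> slice A g \<eta> \<noteq> {}"
    then have meets: "\<forall>U\<in>P. \<forall>(g, \<eta>)\<in>\<S> U. B \<inter> slice A g \<eta> \<noteq> {}"
      by (simp only: ball_UN)
    have "convex hull B \<inter> V \<noteq> {}" if "openin (subtopology weak_topology A) V" "V \<noteq> {}" for V
    proof -
      have "\<exists>U\<in>P. U \<subseteq> V"
        using P that unfolding pi_base_def by simp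
      then obtain U where "U \<in> P" "U \<subseteq> V" ..
      then have "slices_force A (\<S> U) U" "\<forall>(g, \<eta>)\<in>\<S> U. B \<inter> slice A g \<eta> \<noteq> {}"
        using \<S> meets by blast+
      then have "convex hull B \<inter> U \<noteq> {}"
        by (rule slices_forceD)
      with \<open>U \<subseteq> V\<close> show ?thesis
        by blast
    qed
    then show "A \<subseteq> closure (convex hull B)"
      by (rule subset_closure_if_meets_weakly_open[OF convex_convex_hull])
  qed
qed

theorem proposition2p21:
  fixes A :: "'a::banach set"
  assumes "convex A" and "bounded A"
    and "has_countable_pi_base (subtopology weak_topology A)"
  shows "SCD_set A"
proof -
  obtain P where "countable P" and P: "pi_base (subtopology weak_topology A) P"
    using assms(3) unfolding has_countable_pi_base_def by blast
  then show ?thesis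
  proof (rule SCD_set_if_pi_base_forced_by_slices)
    fix U assume "U \<in> P"
    with P have "openin (subtopology weak_topology A) U" "U \<noteq> {}"
      unfolding pi_base_def by auto
    then show "\<exists>\<S>. finite \<S> \<and> admissible_slices \<S> \<and> slices_force A \<S> U"
      by (rule exists_slices_force_weakly_open[OF assms(1,2)])
  qed
qed

end
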